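(* In the setting below, assume each $f_i$ is $L_i$-smooth and $\eta_k\le\frac1{2n\sqrt{\bar LL^*}}$ for all $k\in[K]$. Then for any permutations $\sigma_1,\dots,\sigma_K$ and every $k\in[K]$, $$F(x_{k+1})-F(x_* )\le\frac{\|x_*-x_1\|^2}{2n\sum_{\ell=1}^k\eta_\ell}+\sum_{\ell=1}^k\frac{4\eta_\ell^3R_\ell}{\sum_{s=\ell}^k\eta_s}+\sum_{\ell=2}^k\frac{8n^2\bar L^2\eta_{\ell-1}\left(\sum_{s=\ell}^k\eta_s^3\right)}{\left(\sum_{s=\ell}^k\eta_s\right)\left(\sum_{s=\ell-1}^k\eta_s\right)}B_f(x_\ell,x_* ),$$ where $R_\ell=\sum_{i=2}^n\frac{L_{\sigma_\ell^i}}{n}\Big\|\sum_{j=1}^{i-1}\nabla f_{\sigma_\ell^j}(x_* )\Big\|^2$.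
   Context: Setting. Let $n,d\in\mathbb N$, let $f_1,\dots,f_n:\mathbb R^d\to\mathbb R$ be convex, $f=\frac1n\sum_{i=1}^nf_i$, let $\psi:\mathbb R^d\to\mathbb R\cup\{+\infty\}$ be proper, closed and convex, and $F=f+\psi$. $B_g(x,y)=g(x)-g(y)-\langle\nabla g(y),x-y\rangle$ is the Bregman divergence. Assume there is $x_*\in\mathbb R^d$ with $F(x_* )=\inf_{x}F(x)\in\mathbb R$. Proximal shuffling gradient method: given $x_1\in\mathrm{dom}\,\psi$, a number of epochs $K\ge2$ and stepsizes $\eta_k>0$, for $k=1,\dots,K$: choose a permutation $\sigma_k=(\sigma_k^1,\dots,\sigma_k^n)$ of $[n]=\{1,\dots,n\}$; set $x_k^1=x_k$ and $x_k^{i+1}=x_k^i-\eta_k\nabla f_{\sigma_k^i}(x_k^i)$ for $i=1,\dots,n$; set $x_{k+1}=\arg\min_{x\in\mathbb R^d}\{n\psi(x)+\frac{1}{2\eta_k}\|x-x_k^{n+1}\|^2\}$. Smoothness: each $f_i$ is differentiable with $\|\nabla f_i(x)-\nabla f_i(y)\|\le L_i\|x-y\|$ for all $x,y$, $L_i>0$; $\bar L=\frac1n\sum_iL_i$, $L^*=\max_iL_i$. *)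

theory Defs
  imports "HOL-Analysis.Analysis"
begin

definition proper_fun :: "('a \<Rightarrow> ereal) \<Rightarrow> bool" where
  "proper_fun \<psi> \<longleftrightarrow> (\<forall>x. \<psi> x \<noteq> -\<infinity>) \<and> (\<exists>x. \<psi> x < \<infinity>)"

definition ereal_convex :: "('a::real_vector \<Rightarrow> ereal) \<Rightarrow> bool" where
  "ereal_convex \<psi> \<longleftrightarrow> (\<forall>x y (t::real). 0 \<le> t \<and> t \<le> 1 \<longrightarrow>
      \<psi> (t *\<^sub>R x + (1 - t) *\<^sub>R y) \<le> ereal t * \<psi> x + ereal (1 - t) * \<psi> y)"

definition closed_fun :: "('a::topological_space \<Rightarrow> ereal) \<Rightarrow> bool" where
  "closed_fun \<psi> \<longleftrightarrow> closed {(x, t::real). \<psi> x \<le> ereal t}"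

definition avg_fun :: "nat \<Rightarrow> (nat \<Rightarrow> 'a \<Rightarrow> real) \<Rightarrow> 'a \<Rightarrow> real" where
  "avg_fun n f x = (1 / real n) * (\<Sum>i=1..n. f i x)"

definition avg_grad :: "nat \<Rightarrow> (nat \<Rightarrow> 'a \<Rightarrow> 'a::real_vector) \<Rightarrow> 'a \<Rightarrow> 'a" where
  "avg_grad n g x = (1 / real n) *\<^sub>R (\<Sum>i=1..n. g i x)"

definition bregman :: "('a \<Rightarrow> real) \<Rightarrow> ('a \<Rightarrow> 'a::real_inner) \<Rightarrow> 'a \<Rightarrow> 'a \<Rightarrow> real" where
  "bregman f gf x y = f x - f y - inner (gf y) (x - y)"

text \<open>Inner pass of epoch: shuffle_pass eta s g x0 i = x_k^{i+1}, with
  x_k^1 = x0 and x_k^{i+1} = x_k^i - eta * grad f_{s i}(x_k^i).\<close>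
fun shuffle_pass :: "real \<Rightarrow> (nat \<Rightarrow> nat) \<Rightarrow> (nat \<Rightarrow> 'a \<Rightarrow> 'a::real_vector) \<Rightarrow> 'a \<Rightarrow> nat \<Rightarrow> 'a" where
  "shuffle_pass eta s g x0 0 = x0"
| "shuffle_pass eta s g x0 (Suc i) =
     shuffle_pass eta s g x0 i - eta *\<^sub>R g (s (Suc i)) (shuffle_pass eta s g x0 i)"

definition is_prox_point :: "nat \<Rightarrow> ('a \<Rightarrow> ereal) \<Rightarrow> real \<Rightarrow> 'a::real_normed_vector \<Rightarrow> 'a \<Rightarrow> bool" where
  "is_prox_point n \<psi> eta y z \<longleftrightarrow>
     (\<forall>w. ereal (real n) * \<psi> z + ereal ((norm (z - y))\<^sup>2 / (2 * eta))
          \<le> ereal (real n) * \<psi> w + ereal ((norm (w - y))\<^sup>2 / (2 * eta)))"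

end

theory Submission
  imports Defs
begin

text \<open>Each epoch of the proximal shuffling method is a proximal gradient step with a perturbed
  gradient. Smoothness and convexity of the components (via the cocoercivity of their gradients)
  bound the perturbation by the squared partial sums of the component gradients at x_* and by the
  Bregman divergence of f between the comparison point and x_*; this gives, for every point z of
  the domain of psi, a one-epoch inequality for the squared distance to z. To reach the last
  iterate rather than an average, epoch t is compared with z_t, a convex combination of x_*,
  x_2, ..., x_t whose weights come from the tail sums eta_t + ... + eta_k. Divided by these tail
  sums, the one-epoch inequalities telescope, and Jensen's inequality for the convex Bregman
  divergence at z_t produces the last sum of the bound.\<close>

section \<open>Smooth convex functions\<close>

lemma lipschitz_gradient_upper_bound:
  fixes h :: "'a::real_inner \<Rightarrow> real"
  assumes deriv: "\<And>y. (h has_derivative (\<lambda>v. inner (gh y) v)) (at y)"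
    and lip: "\<And>y z. norm (gh y - gh z) \<le> L * norm (y - z)"
  shows "h u \<le> h v + inner (gh v) (u - v) + L / 2 * (norm (u - v))\<^sup>2"
proof -
  define d where "d = u - v"
  define \<phi> where "\<phi> t = h (v + t *\<^sub>R d) - t * inner (gh v) d - L / 2 * t\<^sup>2 * (norm d)\<^sup>2" for t
  have \<phi>_deriv: "DERIV \<phi> t :> inner (gh (v + t *\<^sub>R d) - gh v) d - L * t * (norm d)\<^sup>2" for t
  proof -
    have "((\<lambda>t. v + t *\<^sub>R d) has_derivative (\<lambda>s. s *\<^sub>R d)) (at t)"
      by (auto intro!: derivative_eq_intros)
    from diff_chain_at[OF this deriv]
    have "((\<lambda>t. h (v + t *\<^sub>R d)) has_derivative (\<lambda>s. inner (gh (v + t *\<^sub>R d)) (s *\<^sub>R d))) (at t)"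
      by (simp add: o_def)
    then have "((\<lambda>t. h (v + t *\<^sub>R d)) has_real_derivative inner (gh (v + t *\<^sub>R d)) d) (at t)"
      unfolding has_field_derivative_def by (rule has_derivative_eq_rhs) (auto simp: fun_eq_iff)
    then show ?thesis unfolding \<phi>_def
      by (auto intro!: derivative_eq_intros simp: inner_diff_left power2_eq_square algebra_simps)
  qed
  have \<phi>_deriv_nonpos: "inner (gh (v + t *\<^sub>R d) - gh v) d - L * t * (norm d)\<^sup>2 \<le> 0" if "0 \<le> t" for t
  proof -
    have "inner (gh (v + t *\<^sub>R d) - gh v) d \<le> norm (gh (v + t *\<^sub>R d) - gh v) * norm d"
      by (rule norm_cauchy_schwarz)
    also have "\<dots> \<le> L * norm (t *\<^sub>R d) * norm d"
      using lip[of "v + t *\<^sub>R d" v] by (intro mult_right_mono) auto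
    finally show ?thesis using that by (simp add: power2_eq_square)
  qed
  have "\<phi> 1 \<le> \<phi> 0"
  proof (rule DERIV_nonpos_imp_nonincreasing[of 0 1])
    fix t :: real assume "0 \<le> t"
    then show "\<exists>y. DERIV \<phi> t :> y \<and> y \<le> 0" using \<phi>_deriv \<phi>_deriv_nonpos by blast
  qed simp
  then show ?thesis unfolding \<phi>_def d_def by simp
qed

lemma convex_gradient_lower_bound:
  fixes h :: "'a::real_inner \<Rightarrow> real"
  assumes cvx: "convex_on UNIV h" and deriv: "(h has_derivative (\<lambda>v. inner G v)) (at v0)"
  shows "h v0 + inner G (u - v0) \<le> h u"
proof -
  define d where "d = u - v0"
  define \<phi> where "\<phi> t = h (v0 + t *\<^sub>R d)" for t
  have "convex_on UNIV \<phi>"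
  proof (rule convex_onI)
    fix t x y :: real assume "0 < t" "t < 1"
    moreover have "v0 + ((1 - t) *\<^sub>R x + t *\<^sub>R y) *\<^sub>R d = (1 - t) *\<^sub>R (v0 + x *\<^sub>R d) + t *\<^sub>R (v0 + y *\<^sub>R d)"
      by (simp add: algebra_simps)
    ultimately show "\<phi> ((1 - t) *\<^sub>R x + t *\<^sub>R y) \<le> (1 - t) * \<phi> x + t * \<phi> y"
      unfolding \<phi>_def using convex_onD[OF cvx, of t "v0 + x *\<^sub>R d" "v0 + y *\<^sub>R d"] by simp
  qed simp
  moreover have "(\<phi> has_real_derivative inner G d) (at 0)"
  proof -
    have "((\<lambda>t. v0 + t *\<^sub>R d) has_derivative (\<lambda>s. s *\<^sub>R d)) (at 0)"
      by (auto intro!: derivative_eq_intros)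
    moreover have "(h has_derivative (\<lambda>v. inner G v)) (at (v0 + 0 *\<^sub>R d))"
      using deriv by simp
    ultimately have "(\<phi> has_derivative (\<lambda>s. inner G (s *\<^sub>R d))) (at 0)"
      unfolding \<phi>_def by (rule diff_chain_at[unfolded o_def])
    then show ?thesis
      unfolding has_field_derivative_def by (rule has_derivative_eq_rhs) (auto simp: fun_eq_iff)
  qed
  ultimately have "\<phi> 1 - \<phi> 0 \<ge> inner G d * (1 - 0)"
    by (intro convex_on_imp_above_tangent) auto
  then show ?thesis unfolding \<phi>_def d_def by simp
qed

lemma convex_lipschitz_gradient_lower_bound:
  fixes h :: "'a::real_inner \<Rightarrow> real"
  assumes cvx: "convex_on UNIV h"
    and deriv: "\<And>y. (h has_derivative (\<lambda>v. inner (gh y) v)) (at y)"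
    and lip: "\<And>y z. norm (gh y - gh z) \<le> L * norm (y - z)"
    and L: "L > 0"
  shows "h y + inner (gh y) (z - y) + (norm (gh z - gh y))\<^sup>2 / (2 * L) \<le> h z"
proof -
  define \<delta> where "\<delta> = gh z - gh y"
  \<comment> \<open>compare both bounds at the point one gradient step away from z\<close>
  define w where "w = z - (1 / L) *\<^sub>R \<delta>"
  have "h y + inner (gh y) (w - y) \<le> h w"
    by (rule convex_gradient_lower_bound[OF cvx deriv])
  moreover have "h w \<le> h z + inner (gh z) (w - z) + L / 2 * (norm (w - z))\<^sup>2"
    by (rule lipschitz_gradient_upper_bound[OF deriv lip])
  moreover have "inner (gh y) (w - y) = inner (gh y) (z - y) - inner (gh y) \<delta> / L"
    and "inner (gh z) (w - z) = - inner (gh z) \<delta> / L"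
    and "L / 2 * (norm (w - z))\<^sup>2 = (norm \<delta>)\<^sup>2 / (2 * L)"
    using L by (simp_all add: w_def inner_diff_right inner_add_right power2_eq_square field_simps)
  moreover have "inner (gh z) \<delta> - inner (gh y) \<delta> = (norm \<delta>)\<^sup>2"
    by (simp add: \<delta>_def power2_norm_eq_inner inner_diff_left)
  ultimately show ?thesis using L by (simp add: \<delta>_def field_simps)
qed

lemma convex_lipschitz_gradient_three_point:
  fixes h :: "'a::real_inner \<Rightarrow> real"
  assumes cvx: "convex_on UNIV h"
    and deriv: "\<And>y. (h has_derivative (\<lambda>v. inner (gh y) v)) (at y)"
    and lip: "\<And>y z. norm (gh y - gh z) \<le> L * norm (y - z)"
    and L: "L > 0"
  shows "h u - h z \<le> inner (gh y) (u - z) + L / 2 * (norm (u - y))\<^sup>2 - (norm (gh y - gh z))\<^sup>2 / (2 * L)"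
proof -
  have "h u \<le> h y + inner (gh y) (u - y) + L / 2 * (norm (u - y))\<^sup>2"
    by (rule lipschitz_gradient_upper_bound[OF deriv lip])
  moreover have "h y + inner (gh y) (z - y) + (norm (gh z - gh y))\<^sup>2 / (2 * L) \<le> h z"
    by (rule convex_lipschitz_gradient_lower_bound[OF cvx deriv lip L])
  moreover have "inner (gh y) (u - z) = inner (gh y) (u - y) - inner (gh y) (z - y)"
    by (simp add: inner_diff_right)
  ultimately show ?thesis by (simp add: norm_minus_commute)
qed

lemma convex_on_avg_fun:
  assumes "\<And>i. i \<in> {1..n} \<Longrightarrow> convex_on UNIV (f i)"
  shows "convex_on UNIV (avg_fun n f)"
proof (rule convex_onI)
  fix t :: real and u v assume t: "0 < t" "t < 1"
  have "(\<Sum>i=1..n. f i ((1 - t) *\<^sub>R u + t *\<^sub>R v)) \<le> (\<Sum>i=1..n. (1 - t) * f i u + t * f i v)"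
    using assms t by (intro sum_mono convex_onD) auto
  also have "\<dots> = (1 - t) * (\<Sum>i=1..n. f i u) + t * (\<Sum>i=1..n. f i v)"
    by (simp add: sum.distrib sum_distrib_left)
  finally have "1 / real n * (\<Sum>i=1..n. f i ((1 - t) *\<^sub>R u + t *\<^sub>R v))
      \<le> 1 / real n * ((1 - t) * (\<Sum>i=1..n. f i u) + t * (\<Sum>i=1..n. f i v))"
    by (rule mult_left_mono) simp
  then show "avg_fun n f ((1 - t) *\<^sub>R u + t *\<^sub>R v) \<le> (1 - t) * avg_fun n f u + t * avg_fun n f v"
    by (simp add: avg_fun_def ring_distribs mult.left_commute diff_divide_distrib)
qed simp

lemma convex_on_bregman:
  assumes "convex_on UNIV h"
  shows "convex_on UNIV (\<lambda>v. bregman h G v y)"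
proof (rule convex_onI)
  fix t :: real and u v assume "0 < t" "t < 1"
  then show "bregman h G ((1 - t) *\<^sub>R u + t *\<^sub>R v) y \<le> (1 - t) * bregman h G u y + t * bregman h G v y"
    using convex_onD[OF assms, of t u v]
    by (simp add: bregman_def inner_diff_right inner_add_right algebra_simps)
qed simp

lemma sum_gradient_diff_le_bregman:
  fixes f :: "nat \<Rightarrow> 'a::real_inner \<Rightarrow> real"
  assumes n: "n \<ge> 1"
    and f_convex: "\<And>i. i \<in> {1..n} \<Longrightarrow> convex_on UNIV (f i)"
    and f_grad: "\<And>i y. i \<in> {1..n} \<Longrightarrow> (f i has_derivative (\<lambda>h. inner (g i y) h)) (at y)"
    and L_pos: "\<And>i. i \<in> {1..n} \<Longrightarrow> L i > 0"
    and f_smooth: "\<And>i y z. i \<in> {1..n} \<Longrightarrow> norm (g i y - g i z) \<le> L i * norm (y - z)"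
  shows "(\<Sum>j=1..n. (norm (g j z - g j y))\<^sup>2 / L j) \<le> 2 * real n * bregman (avg_fun n f) (avg_grad n g) z y"
proof -
  have "(\<Sum>j=1..n. (norm (g j z - g j y))\<^sup>2 / L j) \<le> (\<Sum>j=1..n. 2 * (f j z - f j y - inner (g j y) (z - y)))"
  proof (rule sum_mono)
    fix j assume j: "j \<in> {1..n}"
    have "f j y + inner (g j y) (z - y) + (norm (g j z - g j y))\<^sup>2 / (2 * L j) \<le> f j z"
      using j by (intro convex_lipschitz_gradient_lower_bound f_convex f_grad f_smooth L_pos)
    then show "(norm (g j z - g j y))\<^sup>2 / L j \<le> 2 * (f j z - f j y - inner (g j y) (z - y))"
      using L_pos[OF j] by (simp add: field_simps)
  qed
  also have "\<dots> = 2 * real n * bregman (avg_fun n f) (avg_grad n g) z y"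
    using n by (simp add: bregman_def avg_fun_def avg_grad_def sum_subtractf sum_distrib_left
        sum.distrib inner_sum_left field_simps)
  finally show ?thesis .
qed

lemma norm_add_squared_le: "(norm (u + v :: 'a::real_inner))\<^sup>2 \<le> 2 * (norm u)\<^sup>2 + 2 * (norm v)\<^sup>2"
proof -
  have "(norm (u + v))\<^sup>2 + (norm (u - v))\<^sup>2 = 2 * (norm u)\<^sup>2 + 2 * (norm v)\<^sup>2"
    by (simp add: power2_norm_eq_inner inner_add_left inner_add_right inner_diff_left inner_diff_right inner_commute)
  then show ?thesis by (smt (verit) zero_le_power2)
qed

lemma norm_sum_squared_le_weighted:
  fixes v :: "'b \<Rightarrow> 'a::real_normed_vector"
  assumes "finite B" and "A \<subseteq> B" and w: "\<And>j. j \<in> B \<Longrightarrow> w j > 0"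
  shows "(norm (\<Sum>j\<in>A. v j))\<^sup>2 \<le> (\<Sum>j\<in>B. w j) * (\<Sum>j\<in>B. (norm (v j))\<^sup>2 / w j)"
proof -
  have wA: "w j > 0" if "j \<in> A" for j using assms that by blast
  have "norm (\<Sum>j\<in>A. v j) \<le> (\<Sum>j\<in>A. norm (v j))"
    by (rule norm_sum)
  also have "\<dots> = (\<Sum>j\<in>A. sqrt (w j) * (norm (v j) / sqrt (w j)))"
    using wA by (intro sum.cong) (auto simp: less_imp_neq[symmetric])
  finally have "(norm (\<Sum>j\<in>A. v j))\<^sup>2 \<le> (\<Sum>j\<in>A. sqrt (w j) * (norm (v j) / sqrt (w j)))\<^sup>2"
    by (rule power_mono) simp
  also have "\<dots> \<le> (\<Sum>j\<in>A. (sqrt (w j))\<^sup>2) * (\<Sum>j\<in>A. (norm (v j) / sqrt (w j))\<^sup>2)"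
    by (rule Cauchy_Schwarz_ineq_sum)
  also have "\<dots> = (\<Sum>j\<in>A. w j) * (\<Sum>j\<in>A. (norm (v j))\<^sup>2 / w j)"
    using wA by (intro arg_cong2[where f="(*)"] sum.cong) (auto simp: power_divide less_imp_le)
  also have "\<dots> \<le> (\<Sum>j\<in>B. w j) * (\<Sum>j\<in>B. (norm (v j))\<^sup>2 / w j)"
    using assms by (intro mult_mono sum_mono2 sum_nonneg) (auto simp: less_imp_le)
  finally show ?thesis .
qed

lemma le_of_forall_le_add_mult:
  fixes a b c :: real
  assumes "\<And>\<theta>. 0 < \<theta> \<Longrightarrow> \<theta> \<le> 1 \<Longrightarrow> a \<le> b + \<theta> * c" and "c \<ge> 0"
  shows "a \<le> b"
proof (rule ccontr)
  assume "\<not> a \<le> b"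
  define \<theta> where "\<theta> = min 1 ((a - b) / (c + 1))"
  have "0 < \<theta>" "\<theta> \<le> 1" using \<open>\<not> a \<le> b\<close> assms(2) by (auto simp: \<theta>_def)
  moreover have "\<theta> * c \<le> (a - b) / (c + 1) * c" using assms(2) by (intro mult_right_mono) (auto simp: \<theta>_def)
  moreover have "\<dots> < a - b" using \<open>\<not> a \<le> b\<close> assms(2) by (simp add: field_simps)
  ultimately show False using assms(1) by force
qed

lemma sum_le_card_mult_sqrt_mean_max:
  fixes L :: "nat \<Rightarrow> real"
  assumes "n \<ge> 1" and L: "\<And>i. i \<in> {1..n} \<Longrightarrow> L i \<ge> 0"
  shows "(\<Sum>i=1..n. L i) \<le> real n * sqrt ((\<Sum>i=1..n. L i) / real n * Max (L ` {1..n}))"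
proof -
  define m where "m = (\<Sum>i=1..n. L i) / real n"
  have m: "m \<ge> 0" unfolding m_def using L by (intro divide_nonneg_nonneg sum_nonneg) auto
  have "(\<Sum>i=1..n. L i) \<le> (\<Sum>i=1..n. Max (L ` {1..n}))" by (intro sum_mono Max_ge) auto
  then have "m \<le> Max (L ` {1..n})" using assms(1) by (simp add: m_def field_simps)
  then have "m \<le> sqrt (m * Max (L ` {1..n}))"
    using m real_sqrt_le_mono[of "m * m"] by (simp add: mult_left_mono)
  then have "real n * m \<le> real n * sqrt (m * Max (L ` {1..n}))" by (simp add: mult_left_mono)
  then show ?thesis using assms(1) by (simp add: m_def)
qed

lemma stepsize_le_half_inverse_sum:
  fixes L :: "nat \<Rightarrow> real"
  assumes n: "n \<ge> 1" and L_pos: "\<And>i. i \<in> {1..n} \<Longrightarrow> L i > 0" and \<eta>: "\<eta> > 0"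
    and \<eta>_le: "\<eta> \<le> 1 / (2 * real n * sqrt ((\<Sum>i=1..n. L i) / real n * Max (L ` {1..n})))"
  shows "2 * \<eta> * (\<Sum>i=1..n. L i) \<le> 1"
proof -
  define r where "r = real n * sqrt ((\<Sum>i=1..n. L i) / real n * Max (L ` {1..n}))"
  have sum_le: "(\<Sum>i=1..n. L i) \<le> r"
    unfolding r_def using n L_pos by (intro sum_le_card_mult_sqrt_mean_max) (auto intro: less_imp_le)
  moreover have "(\<Sum>i=1..n. L i) > 0" using n L_pos by (intro sum_pos) auto
  ultimately have "\<eta> * (2 * r) \<le> 1" using \<eta>_le by (simp add: r_def le_divide_eq mult.assoc)
  moreover have "2 * \<eta> * (\<Sum>i=1..n. L i) \<le> 2 * \<eta> * r" using sum_le \<eta> by simp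
  ultimately show ?thesis by (simp add: mult.assoc)
qed

lemma sum_triangle_swap:
  fixes h :: "nat \<Rightarrow> nat \<Rightarrow> 'a::comm_monoid_add"
  shows "(\<Sum>t=1..k. \<Sum>l=2..t. h t l) = (\<Sum>l=2..k. \<Sum>t=l..k. h t l)"
proof (induction k)
  case (Suc k)
  have "(\<Sum>l=2..Suc k. \<Sum>t=l..Suc k. h t l) = (\<Sum>l=2..Suc k. (\<Sum>t=l..k. h t l) + h (Suc k) l)"
    by (rule sum.cong) (auto simp: sum.cl_ivl_Suc)
  also have "\<dots> = (\<Sum>l=2..k. \<Sum>t=l..k. h t l) + (\<Sum>l=2..Suc k. h (Suc k) l)"
    by (simp add: sum.distrib sum.cl_ivl_Suc)
  finally show ?case using Suc by (simp add: sum.cl_ivl_Suc)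
qed simp

section \<open>The proximal step\<close>

lemma ereal_convex_imp_convex_on_dom:
  assumes cvx: "ereal_convex \<psi>" and ne: "\<And>x. \<psi> x \<noteq> -\<infinity>"
  shows "convex_on {x. \<psi> x < \<infinity>} (\<lambda>x. real_of_ereal (\<psi> x))"
proof -
  have comb: "\<psi> (u *\<^sub>R a + v *\<^sub>R b) < \<infinity> \<and>
      real_of_ereal (\<psi> (u *\<^sub>R a + v *\<^sub>R b)) \<le> u * real_of_ereal (\<psi> a) + v * real_of_ereal (\<psi> b)"
    if ab: "\<psi> a < \<infinity>" "\<psi> b < \<infinity>" and uv: "0 \<le> u" "0 \<le> v" "u + v = 1" for a b u v
  proof -
    obtain pa pb where pa: "\<psi> a = ereal pa" and pb: "\<psi> b = ereal pb"
      using ab ne[of a] ne[of b] by (cases "\<psi> a"; cases "\<psi> b") auto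
    have "\<psi> (u *\<^sub>R a + (1 - u) *\<^sub>R b) \<le> ereal u * \<psi> a + ereal (1 - u) * \<psi> b"
      using cvx uv unfolding ereal_convex_def by simp
    moreover have "1 - u = v" using uv by simp
    ultimately have "\<psi> (u *\<^sub>R a + v *\<^sub>R b) \<le> ereal (u * pa + v * pb)"
      by (simp add: pa pb)
    then show ?thesis using ne[of "u *\<^sub>R a + v *\<^sub>R b"] pa pb
      by (cases "\<psi> (u *\<^sub>R a + v *\<^sub>R b)") auto
  qed
  then show ?thesis unfolding convex_on_def by (auto intro!: convexI)
qed

lemma prox_point_in_dom:
  assumes prox: "is_prox_point n \<psi> \<eta> y z" and n: "n \<ge> 1"
    and w: "\<psi> w < \<infinity>" and ne: "\<And>x. \<psi> x \<noteq> -\<infinity>"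
  shows "\<psi> z < \<infinity>"
proof (rule ccontr)
  assume "\<not> \<psi> z < \<infinity>"
  moreover obtain r where "\<psi> w = ereal r" using w ne[of w] by (cases "\<psi> w") auto
  moreover have "ereal (real n) * \<psi> z + ereal ((norm (z - y))\<^sup>2 / (2 * \<eta>))
      \<le> ereal (real n) * \<psi> w + ereal ((norm (w - y))\<^sup>2 / (2 * \<eta>))"
    using prox unfolding is_prox_point_def by blast
  ultimately show False using n by simp
qed

lemma prox_point_inequality:
  assumes prox: "is_prox_point n \<psi> \<eta> y z" and n: "n \<ge> 1" and \<eta>: "\<eta> > 0"
    and cvx: "ereal_convex \<psi>" and w: "\<psi> w < \<infinity>" and ne: "\<And>x. \<psi> x \<noteq> -\<infinity>"
  shows "real n * \<eta> * (real_of_ereal (\<psi> z) - real_of_ereal (\<psi> w)) \<le> inner (y - z) (z - w)"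
proof -
  define p where "p x = real_of_ereal (\<psi> x)" for x
  have p_convex: "convex_on {x. \<psi> x < \<infinity>} p"
    unfolding p_def by (rule ereal_convex_imp_convex_on_dom[OF cvx ne])
  have z: "\<psi> z < \<infinity>" by (rule prox_point_in_dom[OF prox n w ne])
  have fin: "\<psi> x = ereal (p x)" if "\<psi> x < \<infinity>" for x
    using that ne[of x] by (cases "\<psi> x") (auto simp: p_def)
  \<comment> \<open>test the minimality of z against the points z + \<theta> (w - z) and let \<theta> tend to 0\<close>
  have "real n * (p z - p w) \<le> inner (z - y) (w - z) / \<eta> + \<theta> * ((norm (w - z))\<^sup>2 / (2 * \<eta>))"
    if \<theta>: "0 < \<theta>" "\<theta> \<le> 1" for \<theta>
  proof -
    define w' where "w' = (1 - \<theta>) *\<^sub>R z + \<theta> *\<^sub>R w"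
    have "w' \<in> {x. \<psi> x < \<infinity>}"
      using convex_on_imp_convex[OF p_convex] z w \<theta> unfolding w'_def by (intro convexD) auto
    have p_w': "p w' \<le> (1 - \<theta>) * p z + \<theta> * p w"
      using convex_onD[OF p_convex, of \<theta> z w] z w \<theta> unfolding w'_def by auto
    have "ereal (real n) * \<psi> z + ereal ((norm (z - y))\<^sup>2 / (2 * \<eta>))
        \<le> ereal (real n) * \<psi> w' + ereal ((norm (w' - y))\<^sup>2 / (2 * \<eta>))"
      using prox unfolding is_prox_point_def by blast
    then have min: "real n * p z + (norm (z - y))\<^sup>2 / (2 * \<eta>) \<le> real n * p w' + (norm (w' - y))\<^sup>2 / (2 * \<eta>)"
      using fin[OF z] fin[of w'] \<open>w' \<in> _\<close> by simp
    have w'_y: "w' - y = (z - y) + \<theta> *\<^sub>R (w - z)" unfolding w'_def by (simp add: algebra_simps)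
    have expand: "(norm (w' - y))\<^sup>2 = (norm (z - y))\<^sup>2 + (2 * \<theta> * inner (z - y) (w - z) + \<theta>\<^sup>2 * (norm (w - z))\<^sup>2)"
      unfolding w'_y power2_norm_eq_inner
      by (simp add: inner_add_left inner_add_right algebra_simps power2_eq_square inner_commute)
    have "real n * p w' \<le> real n * ((1 - \<theta>) * p z + \<theta> * p w)"
      using p_w' by (simp add: mult_left_mono)
    with min have "real n * p z \<le> real n * ((1 - \<theta>) * p z + \<theta> * p w)
        + (2 * \<theta> * inner (z - y) (w - z) + \<theta>\<^sup>2 * (norm (w - z))\<^sup>2) / (2 * \<eta>)"
      unfolding expand add_divide_distrib by linarith
    then have "\<theta> * (real n * (p z - p w)) \<le> \<theta> * (inner (z - y) (w - z) / \<eta> + \<theta> * ((norm (w - z))\<^sup>2 / (2 * \<eta>)))"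
      using \<eta> by (simp add: field_simps power2_eq_square)
    then show ?thesis using \<theta> by simp
  qed
  then have "real n * (p z - p w) \<le> inner (z - y) (w - z) / \<eta>"
    by (rule le_of_forall_le_add_mult) (use \<eta> in auto)
  moreover have "inner (z - y) (w - z) = inner (y - z) (z - w)"
    by (simp add: inner_diff_left inner_diff_right algebra_simps)
  ultimately show ?thesis using \<eta> by (simp add: p_def field_simps)
qed

section \<open>One epoch\<close>

definition composite :: "nat \<Rightarrow> (nat \<Rightarrow> 'a \<Rightarrow> real) \<Rightarrow> ('a \<Rightarrow> ereal) \<Rightarrow> 'a \<Rightarrow> real" where
  "composite n f \<psi> v = avg_fun n f v + real_of_ereal (\<psi> v)"

text \<open>This is n times the quantity R of the paper; the summand for i = 1 vanishes.\<close>
definition shuffle_residual ::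
    "nat \<Rightarrow> (nat \<Rightarrow> real) \<Rightarrow> (nat \<Rightarrow> nat) \<Rightarrow> (nat \<Rightarrow> 'a \<Rightarrow> 'a::real_normed_vector) \<Rightarrow> 'a \<Rightarrow> real" where
  "shuffle_residual n L s g y = (\<Sum>i=1..n. L (s i) * (norm (\<Sum>j=1..i-1. g (s j) y))\<^sup>2)"

lemma shuffle_residual_eq:
  assumes "n \<ge> 1"
  shows "shuffle_residual n L s g y = real n * (\<Sum>i=2..n. L (s i) / real n * (norm (\<Sum>j=1..i-1. g (s j) y))\<^sup>2)"
  using assms
  by (simp add: shuffle_residual_def sum.atLeast_Suc_atMost numeral_2_eq_2 sum_distrib_left)

lemma shuffle_pass_eq_sum:
  "shuffle_pass \<eta> s g x k = x - \<eta> *\<^sub>R (\<Sum>i=1..k. g (s i) (shuffle_pass \<eta> s g x (i - 1)))"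
  by (induction k) (auto simp: algebra_simps)

lemma norm_shifted_partial_sum_squared_le:
  fixes a b c :: "nat \<Rightarrow> 'a::real_inner"
  assumes w: "\<And>i. i \<in> {1..n} \<Longrightarrow> w i > 0" and i: "i \<in> {1..n}"
    and b: "(\<Sum>j=1..n. (norm (b j))\<^sup>2 / w j) \<le> \<beta>"
  shows "(norm (d + \<eta> *\<^sub>R (\<Sum>j=1..i-1. a j + b j + c j)))\<^sup>2 \<le> 2 * (norm d)\<^sup>2
    + 8 * \<eta>\<^sup>2 * (norm (\<Sum>j=1..i-1. a j))\<^sup>2 + 8 * \<eta>\<^sup>2 * (\<Sum>j=1..n. w j) * \<beta>
    + 4 * \<eta>\<^sup>2 * (\<Sum>j=1..n. w j) * (\<Sum>j=1..n. (norm (c j))\<^sup>2 / w j)"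
proof -
  define W where "W = (\<Sum>j=1..n. w j)"
  define sa sb sc where "sa = (\<Sum>j=1..i-1. a j)" and "sb = (\<Sum>j=1..i-1. b j)" and "sc = (\<Sum>j=1..i-1. c j)"
  have partial: "(norm (\<Sum>j=1..i-1. v j))\<^sup>2 \<le> W * (\<Sum>j=1..n. (norm (v j))\<^sup>2 / w j)" for v :: "nat \<Rightarrow> 'a"
    unfolding W_def using i w by (intro norm_sum_squared_le_weighted) auto
  have W: "W \<ge> 0" unfolding W_def using w by (intro sum_nonneg) (auto intro: less_imp_le)
  have "(norm (sa + sb + sc))\<^sup>2 \<le> 4 * (norm sa)\<^sup>2 + 4 * (norm sb)\<^sup>2 + 2 * (norm sc)\<^sup>2"
    using norm_add_squared_le[of "sa + sb" sc] norm_add_squared_le[of sa sb] by simp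
  moreover have "(norm sb)\<^sup>2 \<le> W * \<beta>"
    using partial[of b] b W unfolding sb_def by (meson mult_left_mono order_trans)
  moreover have "(norm sc)\<^sup>2 \<le> W * (\<Sum>j=1..n. (norm (c j))\<^sup>2 / w j)"
    using partial[of c] unfolding sc_def .
  ultimately have "(norm (sa + sb + sc))\<^sup>2 \<le> 4 * (norm sa)\<^sup>2 + 4 * (W * \<beta>) + 2 * (W * (\<Sum>j=1..n. (norm (c j))\<^sup>2 / w j))"
    by linarith
  from mult_left_mono[OF this, of "2 * \<eta>\<^sup>2"]
  have "2 * \<eta>\<^sup>2 * (norm (sa + sb + sc))\<^sup>2 \<le> 8 * \<eta>\<^sup>2 * (norm sa)\<^sup>2 + 8 * \<eta>\<^sup>2 * W * \<beta>
      + 4 * \<eta>\<^sup>2 * W * (\<Sum>j=1..n. (norm (c j))\<^sup>2 / w j)"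
    by (simp add: algebra_simps)
  moreover have "(norm (d + \<eta> *\<^sub>R (\<Sum>j=1..i-1. a j + b j + c j)))\<^sup>2
      \<le> 2 * (norm d)\<^sup>2 + 2 * \<eta>\<^sup>2 * (norm (sa + sb + sc))\<^sup>2"
    using norm_add_squared_le[of d "\<eta> *\<^sub>R (sa + sb + sc)"]
    by (simp add: sa_def sb_def sc_def sum.distrib power_mult_distrib)
  ultimately show ?thesis unfolding W_def sa_def by linarith
qed

lemma shuffling_error_bound:
  fixes a b c P :: "nat \<Rightarrow> 'a::real_inner"
  assumes w: "\<And>i. i \<in> {1..n} \<Longrightarrow> w i > 0"
    and P: "\<And>i. i \<in> {1..n} \<Longrightarrow> P i = d + \<eta> *\<^sub>R (\<Sum>j=1..i-1. a j + b j + c j)"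
    and \<eta>: "\<eta> > 0" and step: "2 * \<eta> * (\<Sum>i=1..n. w i) \<le> 1"
    and b: "(\<Sum>j=1..n. (norm (b j))\<^sup>2 / w j) \<le> \<beta>"
  shows "\<eta> * (\<Sum>i=1..n. w i * (norm (P i))\<^sup>2) - \<eta> * (\<Sum>i=1..n. (norm (c i))\<^sup>2 / w i) - (norm d)\<^sup>2
    \<le> 8 * \<eta>^3 * (\<Sum>i=1..n. w i * (norm (\<Sum>j=1..i-1. a j))\<^sup>2) + 8 * \<eta>^3 * (\<Sum>i=1..n. w i)\<^sup>2 * \<beta>"
proof -
  define W where "W = (\<Sum>i=1..n. w i)"
  define C where "C = (\<Sum>i=1..n. (norm (c i))\<^sup>2 / w i)"
  define A where "A i = (norm (\<Sum>j=1..i-1. a j))\<^sup>2" for i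
  have W: "W \<ge> 0" unfolding W_def using w by (intro sum_nonneg) (auto intro: less_imp_le)
  have C: "C \<ge> 0" unfolding C_def using w by (intro sum_nonneg) (simp add: less_imp_le)
  have "(\<Sum>i=1..n. w i * (norm (P i))\<^sup>2)
      \<le> (\<Sum>i=1..n. w i * (2 * (norm d)\<^sup>2 + 8 * \<eta>\<^sup>2 * W * \<beta> + 4 * \<eta>\<^sup>2 * W * C) + 8 * \<eta>\<^sup>2 * (w i * A i))"
  proof (rule sum_mono)
    fix i assume i: "i \<in> {1..n}"
    from mult_left_mono[OF norm_shifted_partial_sum_squared_le[OF w i b, of d \<eta> a c], of "w i"] w[OF i]
    show "w i * (norm (P i))\<^sup>2 \<le> w i * (2 * (norm d)\<^sup>2 + 8 * \<eta>\<^sup>2 * W * \<beta> + 4 * \<eta>\<^sup>2 * W * C) + 8 * \<eta>\<^sup>2 * (w i * A i)"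
      by (simp add: P[OF i] W_def C_def A_def algebra_simps)
  qed
  also have "\<dots> = 2 * W * (norm d)\<^sup>2 + 8 * \<eta>\<^sup>2 * W\<^sup>2 * \<beta> + 4 * \<eta>\<^sup>2 * W\<^sup>2 * C + 8 * \<eta>\<^sup>2 * (\<Sum>i=1..n. w i * A i)"
    by (simp add: W_def sum.distrib flip: sum_distrib_left sum_distrib_right) (simp add: algebra_simps power2_eq_square)
  finally have "\<eta> * (\<Sum>i=1..n. w i * (norm (P i))\<^sup>2) \<le> \<eta> * (2 * W * (norm d)\<^sup>2 + 8 * \<eta>\<^sup>2 * W\<^sup>2 * \<beta> + 4 * \<eta>\<^sup>2 * W\<^sup>2 * C + 8 * \<eta>\<^sup>2 * (\<Sum>i=1..n. w i * A i))"
    using \<eta> by (simp add: mult_left_mono)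
  then have "\<eta> * (\<Sum>i=1..n. w i * (norm (P i))\<^sup>2)
      \<le> (2 * \<eta> * W) * (norm d)\<^sup>2 + 8 * \<eta>^3 * W\<^sup>2 * \<beta> + (2 * \<eta> * W)\<^sup>2 * (\<eta> * C) + 8 * \<eta>^3 * (\<Sum>i=1..n. w i * A i)"
    by (simp add: algebra_simps power2_eq_square power3_eq_cube)
  moreover have "(2 * \<eta> * W) * (norm d)\<^sup>2 \<le> (norm d)\<^sup>2"
    using step \<eta> W by (simp add: W_def mult_left_le_one_le)
  moreover have "(2 * \<eta> * W)\<^sup>2 * (\<eta> * C) \<le> \<eta> * C"
    using step \<eta> W C by (simp add: W_def mult_left_le_one_le power_le_one)
  ultimately show ?thesis unfolding W_def C_def A_def by linarith
qed

lemma epoch_inequality_with_drift: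
  fixes n :: nat and f :: "nat \<Rightarrow> 'a::real_inner \<Rightarrow> real" and g :: "nat \<Rightarrow> 'a \<Rightarrow> 'a"
  assumes n: "n \<ge> 1"
    and f_convex: "\<And>i. i \<in> {1..n} \<Longrightarrow> convex_on UNIV (f i)"
    and f_grad: "\<And>i y. i \<in> {1..n} \<Longrightarrow> (f i has_derivative (\<lambda>h. inner (g i y) h)) (at y)"
    and L_pos: "\<And>i. i \<in> {1..n} \<Longrightarrow> L i > 0"
    and f_smooth: "\<And>i y z. i \<in> {1..n} \<Longrightarrow> norm (g i y - g i z) \<le> L i * norm (y - z)"
    and s: "bij_betw s {1..n} {1..n}" and \<eta>: "\<eta> > 0"
    and cvx: "ereal_convex \<psi>" and ne: "\<And>x. \<psi> x \<noteq> -\<infinity>"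
    and prox: "is_prox_point n \<psi> \<eta> (shuffle_pass \<eta> s g x n) xp"
    and z: "\<psi> z < \<infinity>"
  defines "Y \<equiv> shuffle_pass \<eta> s g x"
  shows "(norm (xp - z))\<^sup>2 \<le> (norm (x - z))\<^sup>2
      - 2 * real n * \<eta> * (composite n f \<psi> xp - composite n f \<psi> z)
      + \<eta> * (\<Sum>i=1..n. L (s i) * (norm (xp - Y (i - 1)))\<^sup>2)
      - \<eta> * (\<Sum>i=1..n. (norm (g (s i) (Y (i - 1)) - g (s i) z))\<^sup>2 / L (s i))
      - (norm (x - xp))\<^sup>2"
proof -
  define G where "G i = g (s i) (Y (i - 1))" for i
  define Q1 where "Q1 = (\<Sum>i=1..n. L (s i) * (norm (xp - Y (i - 1)))\<^sup>2)"
  define Q2 where "Q2 = (\<Sum>i=1..n. (norm (G i - g (s i) z))\<^sup>2 / L (s i))"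
  have si: "s i \<in> {1..n}" if "i \<in> {1..n}" for i using s that by (auto simp: bij_betw_def)
  have prox_step: "real n * \<eta> * (real_of_ereal (\<psi> xp) - real_of_ereal (\<psi> z)) \<le> inner (Y n - xp) (xp - z)"
    unfolding Y_def by (rule prox_point_inequality[OF prox n \<eta> cvx z ne])
  have "real n * (avg_fun n f xp - avg_fun n f z) \<le> inner (\<Sum>i=1..n. G i) (xp - z) + Q1 / 2 - Q2 / 2"
  proof -
    have "real n * (avg_fun n f xp - avg_fun n f z) = (\<Sum>i=1..n. f (s i) xp - f (s i) z)"
      using n sum.reindex_bij_betw[OF s, of "\<lambda>i. f i v" for v]
      by (simp add: avg_fun_def sum_subtractf field_simps)
    also have "\<dots> \<le> (\<Sum>i=1..n. inner (G i) (xp - z) + L (s i) / 2 * (norm (xp - Y (i - 1)))\<^sup>2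
        - (norm (G i - g (s i) z))\<^sup>2 / (2 * L (s i)))"
      unfolding G_def using si
      by (intro sum_mono convex_lipschitz_gradient_three_point f_convex f_grad f_smooth L_pos) auto
    also have "\<dots> = inner (\<Sum>i=1..n. G i) (xp - z) + Q1 / 2 - Q2 / 2"
      by (simp add: Q1_def Q2_def sum.distrib sum_subtractf inner_sum_left sum_divide_distrib mult.commute)
    finally show ?thesis .
  qed
  from mult_left_mono[OF this, of "2 * \<eta>"] \<eta>
  have gradient_step: "2 * real n * \<eta> * (avg_fun n f xp - avg_fun n f z)
      \<le> 2 * \<eta> * inner (\<Sum>i=1..n. G i) (xp - z) + \<eta> * Q1 - \<eta> * Q2"
    by (simp add: algebra_simps)
  have "x - xp = (Y n - xp) + \<eta> *\<^sub>R (\<Sum>i=1..n. G i)"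
    unfolding Y_def G_def by (subst shuffle_pass_eq_sum) simp
  then have distance: "(norm (x - z))\<^sup>2 = (norm (x - xp))\<^sup>2 + 2 * inner (Y n - xp) (xp - z)
      + 2 * \<eta> * inner (\<Sum>i=1..n. G i) (xp - z) + (norm (xp - z))\<^sup>2"
    using arg_cong[OF add_diff_cancel_left'[of "x - xp" "xp - z", symmetric], of "\<lambda>v. (norm v)\<^sup>2"]
    by (simp add: power2_norm_eq_inner inner_add_left inner_add_right inner_commute algebra_simps)
  from prox_step gradient_step distance show ?thesis
    unfolding composite_def Q1_def[symmetric] Q2_def[symmetric] G_def[symmetric]
    by (simp add: algebra_simps)
qed

lemma epoch_inequality:
  fixes n :: nat and f :: "nat \<Rightarrow> 'a::real_inner \<Rightarrow> real" and g :: "nat \<Rightarrow> 'a \<Rightarrow> 'a"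
  assumes n: "n \<ge> 1"
    and f_convex: "\<And>i. i \<in> {1..n} \<Longrightarrow> convex_on UNIV (f i)"
    and f_grad: "\<And>i y. i \<in> {1..n} \<Longrightarrow> (f i has_derivative (\<lambda>h. inner (g i y) h)) (at y)"
    and L_pos: "\<And>i. i \<in> {1..n} \<Longrightarrow> L i > 0"
    and f_smooth: "\<And>i y z. i \<in> {1..n} \<Longrightarrow> norm (g i y - g i z) \<le> L i * norm (y - z)"
    and s: "bij_betw s {1..n} {1..n}"
    and \<eta>: "\<eta> > 0" and step: "2 * \<eta> * (\<Sum>i=1..n. L i) \<le> 1"
    and cvx: "ereal_convex \<psi>" and ne: "\<And>x. \<psi> x \<noteq> -\<infinity>"
    and prox: "is_prox_point n \<psi> \<eta> (shuffle_pass \<eta> s g x n) xp"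
    and z: "\<psi> z < \<infinity>"
  shows "(norm (xp - z))\<^sup>2 \<le> (norm (x - z))\<^sup>2
      - 2 * real n * \<eta> * (composite n f \<psi> xp - composite n f \<psi> z)
      + 8 * \<eta>^3 * shuffle_residual n L s g y
      + 16 * \<eta>^3 * (\<Sum>i=1..n. L i)\<^sup>2 * real n * bregman (avg_fun n f) (avg_grad n g) z y"
proof -
  define Y where "Y = shuffle_pass \<eta> s g x"
  have si: "s i \<in> {1..n}" if "i \<in> {1..n}" for i using s that by (auto simp: bij_betw_def)
  have reindex: "(\<Sum>i=1..n. h (s i)) = (\<Sum>i=1..n. h i)" for h :: "nat \<Rightarrow> real"
    by (rule sum.reindex_bij_betw[OF s])
  \<comment> \<open>split each increment into its value at y, the drift from y to z, and the drift from z to the iterate\<close>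
  have "\<eta> * (\<Sum>i=1..n. L (s i) * (norm (xp - Y (i - 1)))\<^sup>2)
      - \<eta> * (\<Sum>i=1..n. (norm (g (s i) (Y (i - 1)) - g (s i) z))\<^sup>2 / L (s i)) - (norm (xp - x))\<^sup>2
    \<le> 8 * \<eta>^3 * (\<Sum>i=1..n. L (s i) * (norm (\<Sum>j=1..i-1. g (s j) y))\<^sup>2)
      + 8 * \<eta>^3 * (\<Sum>i=1..n. L (s i))\<^sup>2 * (2 * real n * bregman (avg_fun n f) (avg_grad n g) z y)"
  proof (rule shuffling_error_bound[where b = "\<lambda>j. g (s j) z - g (s j) y"])
    show "\<And>i. i \<in> {1..n} \<Longrightarrow> L (s i) > 0" using L_pos si by blast
    show "xp - Y (i - 1) = (xp - x) + \<eta> *\<^sub>R (\<Sum>j=1..i-1. g (s j) y + (g (s j) z - g (s j) y)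
        + (g (s j) (Y (j - 1)) - g (s j) z))" for i
      unfolding Y_def by (subst shuffle_pass_eq_sum) simp
    show "2 * \<eta> * (\<Sum>i=1..n. L (s i)) \<le> 1" unfolding reindex[of L] by (rule step)
    have "(\<Sum>j=1..n. (norm (g (s j) z - g (s j) y))\<^sup>2 / L (s j)) = (\<Sum>j=1..n. (norm (g j z - g j y))\<^sup>2 / L j)"
      by (rule reindex)
    also have "\<dots> \<le> 2 * real n * bregman (avg_fun n f) (avg_grad n g) z y"
      by (rule sum_gradient_diff_le_bregman[OF n f_convex f_grad L_pos f_smooth])
    finally show "(\<Sum>j=1..n. (norm (g (s j) z - g (s j) y))\<^sup>2 / L (s j))
        \<le> 2 * real n * bregman (avg_fun n f) (avg_grad n g) z y" .
  qed (rule \<eta>)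
  moreover have "(norm (xp - z))\<^sup>2 \<le> (norm (x - z))\<^sup>2
      - 2 * real n * \<eta> * (composite n f \<psi> xp - composite n f \<psi> z)
      + \<eta> * (\<Sum>i=1..n. L (s i) * (norm (xp - Y (i - 1)))\<^sup>2)
      - \<eta> * (\<Sum>i=1..n. (norm (g (s i) (Y (i - 1)) - g (s i) z))\<^sup>2 / L (s i))
      - (norm (x - xp))\<^sup>2"
    unfolding Y_def by (rule epoch_inequality_with_drift[OF n f_convex f_grad L_pos f_smooth s \<eta> cvx ne prox z])
  ultimately show ?thesis
    unfolding shuffle_residual_def reindex by (simp add: norm_minus_commute algebra_simps)
qed

section \<open>Last-iterate averaging\<close>

locale last_iterate_averaging =
  fixes \<eta> :: "nat \<Rightarrow> real" and k :: nat and x :: "nat \<Rightarrow> 'a::real_inner" and x0 :: 'a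
    and D :: "'a set" and F B :: "'a \<Rightarrow> real" and a b :: "nat \<Rightarrow> real"
  assumes k_pos: "k \<ge> 1"
    and eta_pos: "\<And>t. t \<in> {1..k} \<Longrightarrow> \<eta> t > 0"
    and F_convex: "convex_on D F" and B_convex: "convex_on D B"
    and x0_in: "x0 \<in> D" and B_x0: "B x0 \<le> 0"
    and x_in: "\<And>t. t \<in> {1..k} \<Longrightarrow> x (Suc t) \<in> D"
    and b_nonneg: "\<And>t. t \<in> {1..k} \<Longrightarrow> b t \<ge> 0"
    and descent: "\<And>t z. t \<in> {1..k} \<Longrightarrow> z \<in> D \<Longrightarrow>
      (norm (x (Suc t) - z))\<^sup>2 \<le> (norm (x t - z))\<^sup>2 - 2 * \<eta> t * (F (x (Suc t)) - F z) + a t + b t * B z"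
begin

definition tail :: "nat \<Rightarrow> real" where
  "tail t = (\<Sum>s=t..k. \<eta> s)"

definition ratio :: "nat \<Rightarrow> real" where
  "ratio t = tail (Suc t) / tail t"

definition weight :: "nat \<Rightarrow> real" where
  "weight l = \<eta> (l - 1) / (tail (l - 1) * tail l)"

lemma tail_Suc: "t \<le> k \<Longrightarrow> tail t = \<eta> t + tail (Suc t)"
  unfolding tail_def by (simp add: sum.atLeast_Suc_atMost)

lemma tail_pos: "t \<in> {1..k} \<Longrightarrow> tail t > 0"
  unfolding tail_def using eta_pos by (intro sum_pos) auto

lemma tail_nonneg: "1 \<le> t \<Longrightarrow> tail t \<ge> 0"
  unfolding tail_def using eta_pos by (intro sum_nonneg) (auto intro: less_imp_le)

lemma tail_beyond: "tail (Suc k) = 0"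
  by (simp add: tail_def)

lemma ratio_bounds: "t \<in> {1..k} \<Longrightarrow> 0 \<le> ratio t \<and> ratio t \<le> 1"
  using tail_pos tail_nonneg[of "Suc t"] tail_Suc[of t] eta_pos unfolding ratio_def by force

lemma eta_div_tail: "t \<in> {1..k} \<Longrightarrow> \<eta> t / tail t = 1 - ratio t"
  using tail_pos[of t] tail_Suc[of t] unfolding ratio_def by (simp add: field_simps)

text \<open>For t \<ge> 1, comparator t is the convex combination of x0 and x 2, ..., x t with weights
  tail t / tail 1 and tail t * weight l; note weight l = 1 / tail l - 1 / tail (l - 1).\<close>
fun comparator :: "nat \<Rightarrow> 'a" where
  "comparator 0 = x0"
| "comparator (Suc t) = (if t = 0 then x0 else ratio t *\<^sub>R comparator t + (1 - ratio t) *\<^sub>R x (Suc t))"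

lemma comparator_Suc:
  "t \<ge> 1 \<Longrightarrow> comparator (Suc t) = ratio t *\<^sub>R comparator t + (1 - ratio t) *\<^sub>R x (Suc t)"
  by simp

lemma comparator_Suc_0: "comparator (Suc 0) = x0"
  by simp

declare comparator.simps(2)[simp del]

lemma comparator_in: "1 \<le> t \<Longrightarrow> t \<le> Suc k \<Longrightarrow> comparator t \<in> D"
proof (induction t)
  case (Suc t)
  then show ?case
    using x0_in x_in[of t] ratio_bounds[of t] convex_on_imp_convex[OF F_convex]
    by (cases "t = 0") (auto simp: comparator.simps comparator_Suc intro: convexD)
qed simp

lemma comparator_last: "comparator (Suc k) = x (Suc k)"
  using k_pos by (simp add: comparator_Suc ratio_def tail_beyond)

lemma convex_on_comparator_Suc:
  assumes "convex_on D h" and t: "t \<in> {1..k}"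
  shows "h (comparator (Suc t)) \<le> ratio t * h (comparator t) + (1 - ratio t) * h (x (Suc t))"
proof -
  have "h ((1 - ratio t) *\<^sub>R x (Suc t) + ratio t *\<^sub>R comparator t)
      \<le> (1 - ratio t) * h (x (Suc t)) + ratio t * h (comparator t)"
    using ratio_bounds[OF t] comparator_in[of t] x_in[OF t] t by (intro convex_onD[OF assms(1)]) auto
  then show ?thesis using t by (simp add: comparator_Suc add.commute)
qed

lemma B_comparator_le: "1 \<le> t \<Longrightarrow> t \<le> k \<Longrightarrow> B (comparator t) \<le> tail t * (\<Sum>l=2..t. weight l * B (x l))"
proof (induction t)
  case (Suc t)
  show ?case
  proof (cases "t = 0")
    case True
    then show ?thesis using B_x0 by (simp add: comparator_Suc_0)
  next
    case False
    then have t: "t \<in> {1..k}" using Suc by auto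
    have "B (comparator (Suc t)) \<le> ratio t * B (comparator t) + (1 - ratio t) * B (x (Suc t))"
      by (rule convex_on_comparator_Suc[OF B_convex t])
    also have "\<dots> \<le> ratio t * (tail t * (\<Sum>l=2..t. weight l * B (x l))) + (1 - ratio t) * B (x (Suc t))"
      using Suc t ratio_bounds[OF t] by (simp add: mult_left_mono)
    also have "\<dots> = tail (Suc t) * (\<Sum>l=2..Suc t. weight l * B (x l))"
    proof -
      define S where "S = (\<Sum>l=2..t. weight l * B (x l))"
      have h1: "ratio t * tail t = tail (Suc t)"
        using tail_pos[OF t] by (simp add: ratio_def)
      have h2: "1 - ratio t = tail (Suc t) * weight (Suc t)"
        using eta_div_tail[OF t] tail_pos[of "Suc t"] Suc by (simp add: weight_def)
      have "ratio t * (tail t * S) + (1 - ratio t) * B (x (Suc t))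
          = (ratio t * tail t) * S + (1 - ratio t) * B (x (Suc t))"
        by (simp only: mult.assoc)
      also have "\<dots> = tail (Suc t) * (S + weight (Suc t) * B (x (Suc t)))"
        by (simp only: h1 h2 distrib_left mult.assoc)
      finally show ?thesis using t by (simp add: S_def sum.cl_ivl_Suc)
    qed
    finally show ?thesis .
  qed
qed simp

lemma comparator_distance_Suc:
  assumes t: "t \<in> {1..k}"
  shows "(norm (x (Suc t) - comparator (Suc t)))\<^sup>2 / tail (Suc t) \<le> (norm (x (Suc t) - comparator t))\<^sup>2 / tail t"
proof -
  define X where "X = (norm (x (Suc t) - comparator t))\<^sup>2"
  have tail_t: "tail t > 0" by (rule tail_pos[OF t])
  have "x (Suc t) - comparator (Suc t) = ratio t *\<^sub>R (x (Suc t) - comparator t)"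
    using t by (simp add: comparator_Suc algebra_simps)
  then have dist: "(norm (x (Suc t) - comparator (Suc t)))\<^sup>2 = (ratio t)\<^sup>2 * X"
    by (simp add: X_def power_mult_distrib)
  show ?thesis
  proof (cases "tail (Suc t) = 0")
    case False
    then have "tail (Suc t) > 0" using tail_nonneg[of "Suc t"] by simp
    then have "(norm (x (Suc t) - comparator (Suc t)))\<^sup>2 / tail (Suc t) = ratio t * (X / tail t)"
      using tail_t dist by (simp add: ratio_def power2_eq_square field_simps)
    also have "\<dots> \<le> X / tail t"
      using ratio_bounds[OF t] tail_t by (intro mult_left_le_one_le) (auto simp: X_def)
    finally show ?thesis unfolding X_def .
  qed (use tail_t in simp)
qed

text \<open>At t = Suc k the denominator vanishes (and x t = comparator t), so that potential (Suc k)
  is 2 * F (x (Suc k)), using x / 0 = 0.\<close>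
definition potential :: "nat \<Rightarrow> real" where
  "potential t = (norm (x t - comparator t))\<^sup>2 / tail t + 2 * F (comparator t)"

lemma potential_Suc:
  assumes t: "t \<in> {1..k}"
  shows "potential (Suc t) \<le> potential t + (a t + b t * B (comparator t)) / tail t"
proof -
  define X where "X = (norm (x (Suc t) - comparator t))\<^sup>2"
  have tail_t: "tail t > 0" by (rule tail_pos[OF t])
  have "(norm (x (Suc t) - comparator (Suc t)))\<^sup>2 / tail (Suc t) \<le> X / tail t"
    unfolding X_def by (rule comparator_distance_Suc[OF t])
  moreover have "F (comparator (Suc t)) \<le> ratio t * F (comparator t) + (1 - ratio t) * F (x (Suc t))"
    by (rule convex_on_comparator_Suc[OF F_convex t])
  moreover have "X / tail t \<le> (norm (x t - comparator t))\<^sup>2 / tail t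
      - 2 * ((1 - ratio t) * F (x (Suc t))) + 2 * ((1 - ratio t) * F (comparator t))
      + (a t + b t * B (comparator t)) / tail t"
  proof -
    have eta_eq: "\<eta> t = (1 - ratio t) * tail t" using eta_div_tail[OF t] tail_t by (simp add: field_simps)
    have "X \<le> (norm (x t - comparator t))\<^sup>2 - 2 * ((1 - ratio t) * tail t) * (F (x (Suc t)) - F (comparator t))
        + a t + b t * B (comparator t)"
      unfolding X_def using descent[OF t comparator_in[of t], unfolded eta_eq] t by simp
    then have "X / tail t \<le> ((norm (x t - comparator t))\<^sup>2
        - 2 * ((1 - ratio t) * tail t) * (F (x (Suc t)) - F (comparator t)) + a t + b t * B (comparator t)) / tail t"
      using tail_t by (simp add: divide_right_mono)
    also have "\<dots> = (norm (x t - comparator t))\<^sup>2 / tail t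
        - 2 * ((1 - ratio t) * F (x (Suc t))) + 2 * ((1 - ratio t) * F (comparator t))
        + (a t + b t * B (comparator t)) / tail t"
      using tail_t by (simp add: field_simps)
    finally show ?thesis .
  qed
  moreover have "ratio t * F (comparator t) = F (comparator t) - (1 - ratio t) * F (comparator t)"
    by (simp add: algebra_simps)
  ultimately show ?thesis unfolding potential_def by linarith
qed

lemma potential_telescope:
  "1 \<le> m \<Longrightarrow> m \<le> k \<Longrightarrow> potential (Suc m) \<le> potential 1 + (\<Sum>t=1..m. (a t + b t * B (comparator t)) / tail t)"
proof (induction m)
  case (Suc m)
  then show ?case
    using potential_Suc[of "Suc m"] potential_Suc[of 1] by (cases "m = 0") (auto simp: sum.cl_ivl_Suc)
qed simp

theorem last_iterate_bound:
  "2 * (F (x (Suc k)) - F x0) \<le> (norm (x 1 - x0))\<^sup>2 / tail 1 + (\<Sum>t=1..k. a t / tail t)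
    + (\<Sum>l=2..k. weight l * (\<Sum>s=l..k. b s) * B (x l))"
proof -
  have "(\<Sum>t=1..k. b t * B (comparator t) / tail t) \<le> (\<Sum>t=1..k. \<Sum>l=2..t. b t * (weight l * B (x l)))"
  proof (rule sum_mono)
    fix t assume t: "t \<in> {1..k}"
    have "B (comparator t) / tail t \<le> (\<Sum>l=2..t. weight l * B (x l))"
      using B_comparator_le[of t] tail_pos[OF t] t by (simp add: divide_le_eq mult.commute)
    then show "b t * B (comparator t) / tail t \<le> (\<Sum>l=2..t. b t * (weight l * B (x l)))"
      using b_nonneg[OF t] by (simp add: mult_left_mono flip: sum_distrib_left times_divide_eq_right)
  qed
  also have "\<dots> = (\<Sum>l=2..k. \<Sum>t=l..k. b t * (weight l * B (x l)))"
    by (rule sum_triangle_swap)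
  also have "\<dots> = (\<Sum>l=2..k. weight l * (\<Sum>s=l..k. b s) * B (x l))"
    by (intro sum.cong) (simp_all add: sum_distrib_left sum_distrib_right mult_ac)
  finally have "(\<Sum>t=1..k. (a t + b t * B (comparator t)) / tail t)
      \<le> (\<Sum>t=1..k. a t / tail t) + (\<Sum>l=2..k. weight l * (\<Sum>s=l..k. b s) * B (x l))"
    by (simp add: add_divide_distrib sum.distrib)
  with potential_telescope[OF k_pos order.refl] show ?thesis
    by (simp add: potential_def comparator_last tail_beyond comparator_Suc_0)
qed

end

lemma last_iterate_averaging_prox_shuffling:
  fixes n k :: nat and f :: "nat \<Rightarrow> 'a::real_inner \<Rightarrow> real" and g :: "nat \<Rightarrow> 'a \<Rightarrow> 'a"
    and \<psi> :: "'a \<Rightarrow> ereal" and \<sigma> :: "nat \<Rightarrow> nat \<Rightarrow> nat"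
  assumes n: "n \<ge> 1" and k: "k \<ge> 1"
    and f_convex: "\<And>i. i \<in> {1..n} \<Longrightarrow> convex_on UNIV (f i)"
    and f_grad: "\<And>i y. i \<in> {1..n} \<Longrightarrow> (f i has_derivative (\<lambda>h. inner (g i y) h)) (at y)"
    and L_pos: "\<And>i. i \<in> {1..n} \<Longrightarrow> L i > 0"
    and f_smooth: "\<And>i y z. i \<in> {1..n} \<Longrightarrow> norm (g i y - g i z) \<le> L i * norm (y - z)"
    and cvx: "ereal_convex \<psi>" and ne: "\<And>x. \<psi> x \<noteq> -\<infinity>" and xs: "\<psi> xs < \<infinity>"
    and \<eta>: "\<And>t. t \<in> {1..k} \<Longrightarrow> \<eta> t > 0"
    and \<eta>_small: "\<And>t. t \<in> {1..k} \<Longrightarrow> 2 * \<eta> t * (\<Sum>i=1..n. L i) \<le> 1"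
    and perm: "\<And>t. t \<in> {1..k} \<Longrightarrow> bij_betw (\<sigma> t) {1..n} {1..n}"
    and step: "\<And>t. t \<in> {1..k} \<Longrightarrow>
        is_prox_point n \<psi> (\<eta> t) (shuffle_pass (\<eta> t) (\<sigma> t) g (x t) n) (x (Suc t))"
  shows "last_iterate_averaging \<eta> k x xs {v. \<psi> v < \<infinity>} (\<lambda>v. real n * composite n f \<psi> v)
    (\<lambda>v. bregman (avg_fun n f) (avg_grad n g) v xs) (\<lambda>t. 8 * \<eta> t^3 * shuffle_residual n L (\<sigma> t) g xs)
    (\<lambda>t. 16 * \<eta> t^3 * (\<Sum>i=1..n. L i)\<^sup>2 * real n)"
proof
  have dom_convex: "convex {v. \<psi> v < \<infinity>}"
    by (rule convex_on_imp_convex[OF ereal_convex_imp_convex_on_dom[OF cvx ne]])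
  show "convex_on {v. \<psi> v < \<infinity>} (\<lambda>v. real n * composite n f \<psi> v)"
    unfolding composite_def
    by (intro convex_on_cmul convex_on_add convex_on_subset[OF convex_on_avg_fun[OF f_convex]]
        ereal_convex_imp_convex_on_dom cvx ne dom_convex) auto
  show "convex_on {v. \<psi> v < \<infinity>} (\<lambda>v. bregman (avg_fun n f) (avg_grad n g) v xs)"
    by (intro convex_on_subset[OF convex_on_bregman[OF convex_on_avg_fun[OF f_convex]]] dom_convex) auto
  show "x (Suc t) \<in> {v. \<psi> v < \<infinity>}" if "t \<in> {1..k}" for t
    using prox_point_in_dom[OF step[OF that] n xs ne] by simp
  show "(norm (x (Suc t) - z))\<^sup>2 \<le> (norm (x t - z))\<^sup>2
      - 2 * \<eta> t * (real n * composite n f \<psi> (x (Suc t)) - real n * composite n f \<psi> z)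
      + 8 * \<eta> t^3 * shuffle_residual n L (\<sigma> t) g xs
      + 16 * \<eta> t^3 * (\<Sum>i=1..n. L i)\<^sup>2 * real n * bregman (avg_fun n f) (avg_grad n g) z xs"
    if "t \<in> {1..k}" and "z \<in> {v. \<psi> v < \<infinity>}" for t z
    using epoch_inequality[OF n f_convex f_grad L_pos f_smooth perm \<eta> \<eta>_small cvx ne step, of t z xs] that
    by (simp add: algebra_simps)
qed (use k \<eta> xs in \<open>auto simp: bregman_def less_imp_le\<close>)

theorem prox_shuffling_last_iterate_bound:
  fixes n k :: nat and f :: "nat \<Rightarrow> 'a::real_inner \<Rightarrow> real" and g :: "nat \<Rightarrow> 'a \<Rightarrow> 'a"
    and \<psi> :: "'a \<Rightarrow> ereal" and \<sigma> :: "nat \<Rightarrow> nat \<Rightarrow> nat"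
  assumes n: "n \<ge> 1" and k: "k \<ge> 1"
    and f_convex: "\<And>i. i \<in> {1..n} \<Longrightarrow> convex_on UNIV (f i)"
    and f_grad: "\<And>i y. i \<in> {1..n} \<Longrightarrow> (f i has_derivative (\<lambda>h. inner (g i y) h)) (at y)"
    and L_pos: "\<And>i. i \<in> {1..n} \<Longrightarrow> L i > 0"
    and f_smooth: "\<And>i y z. i \<in> {1..n} \<Longrightarrow> norm (g i y - g i z) \<le> L i * norm (y - z)"
    and cvx: "ereal_convex \<psi>" and ne: "\<And>x. \<psi> x \<noteq> -\<infinity>" and xs: "\<psi> xs < \<infinity>"
    and \<eta>: "\<And>t. t \<in> {1..k} \<Longrightarrow> \<eta> t > 0"
    and \<eta>_small: "\<And>t. t \<in> {1..k} \<Longrightarrow> 2 * \<eta> t * (\<Sum>i=1..n. L i) \<le> 1"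
    and perm: "\<And>t. t \<in> {1..k} \<Longrightarrow> bij_betw (\<sigma> t) {1..n} {1..n}"
    and step: "\<And>t. t \<in> {1..k} \<Longrightarrow>
        is_prox_point n \<psi> (\<eta> t) (shuffle_pass (\<eta> t) (\<sigma> t) g (x t) n) (x (Suc t))"
  shows "composite n f \<psi> (x (Suc k)) - composite n f \<psi> xs
    \<le> (norm (xs - x 1))\<^sup>2 / (2 * real n * (\<Sum>l=1..k. \<eta> l))
      + (\<Sum>l=1..k. 4 * (\<eta> l)^3 *
            (\<Sum>i=2..n. L (\<sigma> l i) / real n * (norm (\<Sum>j=1..i-1. g (\<sigma> l j) xs))\<^sup>2)
            / (\<Sum>s=l..k. \<eta> s))
      + (\<Sum>l=2..k. 8 * (real n)\<^sup>2 * ((\<Sum>i=1..n. L i) / real n)\<^sup>2 * \<eta> (l - 1)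
            * (\<Sum>s=l..k. (\<eta> s)^3)
            / ((\<Sum>s=l..k. \<eta> s) * (\<Sum>s=l-1..k. \<eta> s))
            * bregman (avg_fun n f) (avg_grad n g) (x l) xs)"
proof -
  define SL where "SL = (\<Sum>i=1..n. L i)"
  define B where "B v = bregman (avg_fun n f) (avg_grad n g) v xs" for v
  interpret last_iterate_averaging \<eta> k x xs "{v. \<psi> v < \<infinity>}" "\<lambda>v. real n * composite n f \<psi> v" B
    "\<lambda>t. 8 * \<eta> t^3 * shuffle_residual n L (\<sigma> t) g xs" "\<lambda>t. 16 * \<eta> t^3 * SL\<^sup>2 * real n"
    unfolding SL_def B_def
    by (rule last_iterate_averaging_prox_shuffling[where x = x and \<eta> = \<eta> and \<sigma> = \<sigma>,
          OF n k f_convex f_grad L_pos f_smooth cvx ne xs \<eta> \<eta>_small perm step])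
  define T1 where "T1 = (norm (xs - x 1))\<^sup>2 / (2 * real n * tail 1)"
  define T2 where "T2 = (\<Sum>l=1..k. 4 * (\<eta> l)^3 *
      (\<Sum>i=2..n. L (\<sigma> l i) / real n * (norm (\<Sum>j=1..i-1. g (\<sigma> l j) xs))\<^sup>2) / tail l)"
  define T3 where "T3 = (\<Sum>l=2..k. 8 * (real n)\<^sup>2 * (SL / real n)\<^sup>2 * \<eta> (l - 1) * (\<Sum>s=l..k. (\<eta> s)^3)
      / (tail l * tail (l - 1)) * B (x l))"
  have "2 * (real n * composite n f \<psi> (x (Suc k)) - real n * composite n f \<psi> xs)
      \<le> (norm (x 1 - xs))\<^sup>2 / tail 1 + (\<Sum>t=1..k. 8 * \<eta> t^3 * shuffle_residual n L (\<sigma> t) g xs / tail t)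
        + (\<Sum>l=2..k. weight l * (\<Sum>s=l..k. 16 * \<eta> s^3 * SL\<^sup>2 * real n) * B (x l))"
    by (rule last_iterate_bound)
  also have "(norm (x 1 - xs))\<^sup>2 / tail 1 = 2 * real n * T1"
    using n by (simp add: T1_def norm_minus_commute)
  also have "(\<Sum>t=1..k. 8 * \<eta> t^3 * shuffle_residual n L (\<sigma> t) g xs / tail t) = 2 * real n * T2"
    using n by (simp add: T2_def shuffle_residual_eq sum_distrib_left mult.assoc)
  also have "(\<Sum>l=2..k. weight l * (\<Sum>s=l..k. 16 * \<eta> s^3 * SL\<^sup>2 * real n) * B (x l)) = 2 * real n * T3"
  proof -
    have "weight l * (\<Sum>s=l..k. 16 * \<eta> s^3 * SL\<^sup>2 * real n) * B (x l)
        = 2 * real n * (8 * (real n)\<^sup>2 * (SL / real n)\<^sup>2 * \<eta> (l - 1) * (\<Sum>s=l..k. (\<eta> s)^3)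
          / (tail l * tail (l - 1)) * B (x l))" for l
    proof -
      have "(\<Sum>s=l..k. 16 * \<eta> s^3 * SL\<^sup>2 * real n) = 16 * SL\<^sup>2 * real n * (\<Sum>s=l..k. \<eta> s^3)"
        by (simp add: sum_distrib_left mult_ac)
      then show ?thesis using n by (simp add: weight_def power2_eq_square field_simps)
    qed
    then show ?thesis by (simp add: T3_def sum_distrib_left)
  qed
  finally have "(2 * real n) * (composite n f \<psi> (x (Suc k)) - composite n f \<psi> xs)
      \<le> (2 * real n) * (T1 + T2 + T3)"
    by (simp add: algebra_simps)
  then have "composite n f \<psi> (x (Suc k)) - composite n f \<psi> xs \<le> T1 + T2 + T3"
    using n by (simp add: mult_le_cancel_left_pos)
  then show ?thesis by (simp add: T1_def T2_def T3_def tail_def SL_def B_def)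
qed

theorem mainTheorem9:
  fixes n K :: nat
    and f :: "nat \<Rightarrow> 'a::euclidean_space \<Rightarrow> real"
    and g :: "nat \<Rightarrow> 'a \<Rightarrow> 'a"
    and \<psi> :: "'a \<Rightarrow> ereal"
    and L :: "nat \<Rightarrow> real"
    and \<eta> :: "nat \<Rightarrow> real"
    and \<sigma> :: "nat \<Rightarrow> nat \<Rightarrow> nat"
    and x :: "nat \<Rightarrow> 'a"
    and xs :: 'a
  assumes n_pos: "n \<ge> 1"
    and K_ge: "K \<ge> 2"
    and f_convex: "\<And>i. i \<in> {1..n} \<Longrightarrow> convex_on UNIV (f i)"
    and f_grad: "\<And>i y. i \<in> {1..n} \<Longrightarrow> (f i has_derivative (\<lambda>h. inner (g i y) h)) (at y)"
    and L_pos: "\<And>i. i \<in> {1..n} \<Longrightarrow> L i > 0"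
    and f_smooth: "\<And>i y z. i \<in> {1..n} \<Longrightarrow> norm (g i y - g i z) \<le> L i * norm (y - z)"
    and psi_proper: "proper_fun \<psi>"
    and psi_convex: "ereal_convex \<psi>"
    and psi_closed: "closed_fun \<psi>"
    and xs_min: "\<And>y. ereal (avg_fun n f xs) + \<psi> xs \<le> ereal (avg_fun n f y) + \<psi> y"
    and xs_fin: "\<psi> xs < \<infinity>"
    and x1_dom: "\<psi> (x 1) < \<infinity>"
    and eta_pos: "\<And>k. k \<in> {1..K} \<Longrightarrow> \<eta> k > 0"
    and eta_le: "\<And>k. k \<in> {1..K} \<Longrightarrow>
        \<eta> k \<le> 1 / (2 * real n * sqrt ((\<Sum>i=1..n. L i) / real n * Max (L ` {1..n})))"
    and perm: "\<And>k. k \<in> {1..K} \<Longrightarrow> bij_betw (\<sigma> k) {1..n} {1..n}"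
    and step: "\<And>k. k \<in> {1..K} \<Longrightarrow>
        is_prox_point n \<psi> (\<eta> k) (shuffle_pass (\<eta> k) (\<sigma> k) g (x k) n) (x (Suc k))"
    and k_range: "k \<in> {1..K}"
  shows "ereal (avg_fun n f (x (Suc k))) + \<psi> (x (Suc k)) - (ereal (avg_fun n f xs) + \<psi> xs)
    \<le> ereal ((norm (xs - x 1))\<^sup>2 / (2 * real n * (\<Sum>l=1..k. \<eta> l))
      + (\<Sum>l=1..k. 4 * (\<eta> l)^3 *
            (\<Sum>i=2..n. L (\<sigma> l i) / real n * (norm (\<Sum>j=1..i-1. g (\<sigma> l j) xs))\<^sup>2)
            / (\<Sum>s=l..k. \<eta> s))
      + (\<Sum>l=2..k. 8 * (real n)\<^sup>2 * ((\<Sum>i=1..n. L i) / real n)\<^sup>2 * \<eta> (l - 1)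
            * (\<Sum>s=l..k. (\<eta> s)^3)
            / ((\<Sum>s=l..k. \<eta> s) * (\<Sum>s=l-1..k. \<eta> s))
            * bregman (avg_fun n f) (avg_grad n g) (x l) xs))"
proof -
  have ne: "\<And>v. \<psi> v \<noteq> -\<infinity>" using psi_proper by (simp add: proper_fun_def)
  have k: "k \<ge> 1" and epoch: "\<And>t. t \<in> {1..k} \<Longrightarrow> t \<in> {1..K}" using k_range by auto
  have step_small: "2 * \<eta> t * (\<Sum>i=1..n. L i) \<le> 1" if "t \<in> {1..K}" for t
    by (rule stepsize_le_half_inverse_sum[OF n_pos L_pos eta_pos[OF that] eta_le[OF that]])
  note bound = prox_shuffling_last_iterate_bound[where x = x and \<eta> = \<eta> and \<sigma> = \<sigma>,
      OF n_pos k f_convex f_grad L_pos f_smooth psi_convex ne xs_fin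
      eta_pos[OF epoch] step_small[OF epoch] perm[OF epoch] step[OF epoch]]
  obtain p q where "\<psi> (x (Suc k)) = ereal p" and "\<psi> xs = ereal q"
  proof -
    have "\<psi> (x (Suc k)) < \<infinity>"
      using prox_point_in_dom[OF step n_pos xs_fin ne] k_range by simp
    then show ?thesis using that xs_fin ne by (cases "\<psi> (x (Suc k))"; cases "\<psi> xs") auto
  qed
  with bound show ?thesis by (simp add: composite_def)
qed

end
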